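(* Let $L$ be one of the logics $\mathbf{K4}_h$, $\mathbf{KD4}_h$, $\mathbf{S4}_h$, and let $G(L)$ be the corresponding sequent calculus $G(\mathbf{K4}_h)$, $G(\mathbf{KD4}_h)$, $G(\mathbf{S4}_h)$ described in the context. Then $G(L)$ is equivalent to $L$: for all finite multisets $\Gamma,\Delta$ of formulas of $\mathcal{L}_\infty$, the sequent $\Gamma\Rightarrow\Delta$ is provable in $G(L)$ if and only if $L\vdash \bigwedge\Gamma\rightarrow\bigvee\Delta$ (empty conjunction $=\top$, empty disjunction $=\bot$); in particular $L\vdash A$ iff $G(L)\vdash\ \Rightarrow A$.
   Context: The language $\mathcal{L}_\infty$ consists of modal formulas built from propositional atoms, $\bot,\top$, the connectives $\neg,\wedge,\vee,\rightarrow$ and infinitely many unary modalities $\Box_n$ ($n\in\mathbb{N}$), with the restriction that $\Box_n A$ is a formula only if $n$ is strictly greater than the index of every box occurring in $A$. All formulas below are assumed to be in $\mathcal{L}_\infty$ (so axiom instances and rule applications are only those producing $\mathcal{L}_\infty$-formulas). Hilbert systems: consider the axiom schemes (for all $n\ge 0$) $\mathbf{H}$: $\Box_n A\rightarrow\Box_{n+1}A$; $\mathbf{K}_h$: $\Box_n(A\rightarrow B)\rightarrow(\Box_nA\rightarrow\Box_nB)$; $\mathbf{4}_h$: $\Box_nA\rightarrow\Box_{n+1}\Box_nA$; $\mathbf{D}_h$: $\neg\Box_n\bot$; $\mathbf{T}_h$: $\Box_nA\rightarrow A$. For a set $X$ of schemes, $L(X)$ is the least set of $\mathcal{L}_\infty$-formulas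 containing all classical propositional tautologies (over $\mathcal{L}_\infty$-formulas) and all instances of the schemes in $X$, and closed under modus ponens and the rule: from $A$ infer $\Box_nA$ for any $n$ greater than all box indices in $A$. $\mathbf{K4}_h=L(\mathbf{H},\mathbf{K}_h,\mathbf{4}_h)$, $\mathbf{KD4}_h=L(\mathbf{H},\mathbf{K}_h,\mathbf{4}_h,\mathbf{D}_h)$, $\mathbf{S4}_h=L(\mathbf{H},\mathbf{K}_h,\mathbf{4}_h,\mathbf{T}_h)$. Sequent calculi: sequents $\Gamma\Rightarrow\Delta$ with finite multisets. All three systems contain the axioms $A\Rightarrow A$ and $\bot\Rightarrow$, the structural rules of left/right weakening, left/right contraction and cut (from $\Gamma_0\Rightarrow\Delta_0,A$ and $\Gamma_1,A\Rightarrow\Delta_1$ infer $\Gamma_0,\Gamma_1\Rightarrow\Delta_0,\Delta_1$), and the usual classical (LK-style) left and right rules for $\wedge,\vee,\rightarrow,\neg$. Modal rules (in each, the side condition is $n_i<n$ for all $i\in I$): $\Box_{4_h}R$: from $\{\sigma_r\}_{r\in R},\{\gamma_i,\Box_{n_i}\gamma_i\}_{i\in I}\Rightarrow A$ infer $\{\Box_n\sigma_r\}_{r\in R},\{\Box_{n_i}\gamma_i\}_{i\in I}\Rightarrow\Box_nA$; $\Box_{D_h}R$: from $\{\sigma_r\}_{r\in R},\{\gamma_i,\Box_{n_i}\gamma_i\}_{i\in I}\Rightarrow$ infer $\{\Box_n\sigma_r\}_{r\in R},\{\Box_{n_i}\gamma_i\}_{i\in I}\Rightarrow$; $\Box_{S_h}R$: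 from $\{\sigma_r\}_{r\in R},\{\Box_{n_i}\gamma_i\}_{i\in I}\Rightarrow A$ infer $\{\Box_n\sigma_r\}_{r\in R},\{\Box_{n_i}\gamma_i\}_{i\in I}\Rightarrow\Box_nA$; $\Box_hL$: from $\Gamma,A\Rightarrow\Delta$ infer $\Gamma,\Box_nA\Rightarrow\Delta$. $G(\mathbf{K4}_h)$ = axioms + structural + propositional rules + $\Box_{4_h}R$; $G(\mathbf{KD4}_h)$ = $G(\mathbf{K4}_h)$ + $\Box_{D_h}R$; $G(\mathbf{S4}_h)$ = axioms + structural + propositional rules + $\Box_{S_h}R$ + $\Box_hL$. *)

theory Defs
  imports Main "HOL-Library.Multiset"
begin

datatype fm = Atom nat | Bot | Top | Neg fm | Conj fm fm | Disj fm fm | Imp fm fm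
  | Box nat fm

fun boxes :: "fm \<Rightarrow> nat set" where
  "boxes (Atom p) = {}"
| "boxes Bot = {}"
| "boxes Top = {}"
| "boxes (Neg A) = boxes A"
| "boxes (Conj A B) = boxes A \<union> boxes B"
| "boxes (Disj A B) = boxes A \<union> boxes B"
| "boxes (Imp A B) = boxes A \<union> boxes B"
| "boxes (Box n A) = insert n (boxes A)"

fun wff :: "fm \<Rightarrow> bool" where
  "wff (Atom p) = True"
| "wff Bot = True"
| "wff Top = True"
| "wff (Neg A) = wff A"
| "wff (Conj A B) = (wff A \<and> wff B)"
| "wff (Disj A B) = (wff A \<and> wff B)"
| "wff (Imp A B) = (wff A \<and> wff B)"
| "wff (Box n A) = (wff A \<and> (\<forall>m\<in>boxes A. m < n))"

text \<open>Atoms and boxed formulas are treated as propositional variables.\<close>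
fun peval :: "(fm \<Rightarrow> bool) \<Rightarrow> fm \<Rightarrow> bool" where
  "peval v (Atom p) = v (Atom p)"
| "peval v Bot = False"
| "peval v Top = True"
| "peval v (Neg A) = (\<not> peval v A)"
| "peval v (Conj A B) = (peval v A \<and> peval v B)"
| "peval v (Disj A B) = (peval v A \<or> peval v B)"
| "peval v (Imp A B) = (peval v A \<longrightarrow> peval v B)"
| "peval v (Box n A) = v (Box n A)"

definition taut :: "fm \<Rightarrow> bool" where
  "taut A \<longleftrightarrow> (\<forall>v. peval v A)"

datatype logic = K4h | KD4h | S4h

definition ax_H :: "fm \<Rightarrow> bool" where
  "ax_H F \<longleftrightarrow> (\<exists>n A. F = Imp (Box n A) (Box (Suc n) A))"
definition ax_K :: "fm \<Rightarrow> bool" where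
  "ax_K F \<longleftrightarrow> (\<exists>n A B. F = Imp (Box n (Imp A B)) (Imp (Box n A) (Box n B)))"
definition ax_4 :: "fm \<Rightarrow> bool" where
  "ax_4 F \<longleftrightarrow> (\<exists>n A. F = Imp (Box n A) (Box (Suc n) (Box n A)))"
definition ax_D :: "fm \<Rightarrow> bool" where
  "ax_D F \<longleftrightarrow> (\<exists>n. F = Neg (Box n Bot))"
definition ax_T :: "fm \<Rightarrow> bool" where
  "ax_T F \<longleftrightarrow> (\<exists>n A. F = Imp (Box n A) A)"

fun axiom :: "logic \<Rightarrow> fm \<Rightarrow> bool" where
  "axiom K4h F = (ax_H F \<or> ax_K F \<or> ax_4 F)"
| "axiom KD4h F = (ax_H F \<or> ax_K F \<or> ax_4 F \<or> ax_D F)"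
| "axiom S4h F = (ax_H F \<or> ax_K F \<or> ax_4 F \<or> ax_T F)"

text \<open>Hilbert-style derivability in L(X); only L_infinity formulas are produced.\<close>
inductive hil :: "logic \<Rightarrow> fm \<Rightarrow> bool" for L where
  taut: "wff A \<Longrightarrow> taut A \<Longrightarrow> hil L A"
| ax: "wff A \<Longrightarrow> axiom L A \<Longrightarrow> hil L A"
| mp: "hil L (Imp A B) \<Longrightarrow> hil L A \<Longrightarrow> hil L B"
| nec: "hil L A \<Longrightarrow> (\<forall>m\<in>boxes A. m < n) \<Longrightarrow> hil L (Box n A)"

type_synonym sequent = "fm multiset \<times> fm multiset"

definition wf_seq :: "sequent \<Rightarrow> bool" where
  "wf_seq S \<longleftrightarrow> (\<forall>A\<in>#fst S + snd S. wff A)"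

definition boxp :: "nat \<times> fm \<Rightarrow> fm" where
  "boxp p = Box (fst p) (snd p)"

text \<open>Every rule carries the side condition that its conclusion consists of
  L_infinity formulas.\<close>
inductive gprov :: "logic \<Rightarrow> sequent \<Rightarrow> bool" for L where
  id: "wff A \<Longrightarrow> gprov L ({#A#}, {#A#})"
| botL: "gprov L ({#Bot#}, {#})"
| topR: "gprov L ({#}, {#Top#})"
| weakL: "gprov L (G, D) \<Longrightarrow> wff A \<Longrightarrow> gprov L (add_mset A G, D)"
| weakR: "gprov L (G, D) \<Longrightarrow> wff A \<Longrightarrow> gprov L (G, add_mset A D)"
| contrL: "gprov L (add_mset A (add_mset A G), D) \<Longrightarrow> gprov L (add_mset A G, D)"
| contrR: "gprov L (G, add_mset A (add_mset A D)) \<Longrightarrow> gprov L (G, add_mset A D)"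
| cut: "gprov L (G0, add_mset A D0) \<Longrightarrow> gprov L (add_mset A G1, D1)
        \<Longrightarrow> gprov L (G0 + G1, D0 + D1)"
| conjL: "gprov L (add_mset A (add_mset B G), D) \<Longrightarrow> gprov L (add_mset (Conj A B) G, D)"
| conjR: "gprov L (G, add_mset A D) \<Longrightarrow> gprov L (G, add_mset B D)
        \<Longrightarrow> gprov L (G, add_mset (Conj A B) D)"
| disjL: "gprov L (add_mset A G, D) \<Longrightarrow> gprov L (add_mset B G, D)
        \<Longrightarrow> gprov L (add_mset (Disj A B) G, D)"
| disjR: "gprov L (G, add_mset A (add_mset B D)) \<Longrightarrow> gprov L (G, add_mset (Disj A B) D)"
| impL: "gprov L (G, add_mset A D) \<Longrightarrow> gprov L (add_mset B G, D)
        \<Longrightarrow> gprov L (add_mset (Imp A B) G, D)"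
| impR: "gprov L (add_mset A G, add_mset B D) \<Longrightarrow> gprov L (G, add_mset (Imp A B) D)"
| negL: "gprov L (G, add_mset A D) \<Longrightarrow> gprov L (add_mset (Neg A) G, D)"
| negR: "gprov L (add_mset A G, D) \<Longrightarrow> gprov L (G, add_mset (Neg A) D)"
| box4R: "L \<in> {K4h, KD4h} \<Longrightarrow> (\<forall>p\<in>#Gm. fst p < n)
        \<Longrightarrow> gprov L (S + image_mset snd Gm + image_mset boxp Gm, {#A#})
        \<Longrightarrow> wf_seq (image_mset (Box n) S + image_mset boxp Gm, {#Box n A#})
        \<Longrightarrow> gprov L (image_mset (Box n) S + image_mset boxp Gm, {#Box n A#})"
| boxDR: "L = KD4h \<Longrightarrow> (\<forall>p\<in>#Gm. fst p < n)
        \<Longrightarrow> gprov L (S + image_mset snd Gm + image_mset boxp Gm, {#})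
        \<Longrightarrow> wf_seq (image_mset (Box n) S + image_mset boxp Gm, {#})
        \<Longrightarrow> gprov L (image_mset (Box n) S + image_mset boxp Gm, {#})"
| boxSR: "L = S4h \<Longrightarrow> (\<forall>p\<in>#Gm. fst p < n)
        \<Longrightarrow> gprov L (S + image_mset boxp Gm, {#A#})
        \<Longrightarrow> wf_seq (image_mset (Box n) S + image_mset boxp Gm, {#Box n A#})
        \<Longrightarrow> gprov L (image_mset (Box n) S + image_mset boxp Gm, {#Box n A#})"
| boxL: "L = S4h \<Longrightarrow> gprov L (add_mset A G, D) \<Longrightarrow> wff (Box n A)
        \<Longrightarrow> gprov L (add_mset (Box n A) G, D)"

fun conjs :: "fm list \<Rightarrow> fm" where
  "conjs [] = Top"
| "conjs [A] = A"
| "conjs (A # As) = Conj A (conjs As)"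

fun disjs :: "fm list \<Rightarrow> fm" where
  "disjs [] = Bot"
| "disjs [A] = A"
| "disjs (A # As) = Disj A (disjs As)"

end

theory Submission
  imports Defs
begin

text \<open>Soundness: every rule of \<open>G(L)\<close> preserves \<open>L\<close>-provability of the formula
  interpretation of its sequents. Propositional rules are tautological consequences; the
  modal right rules follow from regularity of \<open>\<box>\<^sub>n\<close> (by \<open>K\<^sub>h\<close> and necessitation),
  since \<open>H\<close> and \<open>4\<^sub>h\<close> give \<open>\<box>\<^sub>m\<gamma> \<rightarrow> \<box>\<^sub>n\<gamma>\<close> and \<open>\<box>\<^sub>m\<gamma> \<rightarrow> \<box>\<^sub>n\<box>\<^sub>m\<gamma>\<close> for \<open>m < n\<close>.
  Completeness: the cut-free propositional fragment already proves every propositionally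
  valid sequent (by invertible decomposition), every axiom instance has a short derivation,
  and modus ponens and necessitation are simulated by cut and the modal right rule.\<close>

definition holds :: "(fm \<Rightarrow> bool) \<Rightarrow> sequent \<Rightarrow> bool" where
  "holds v S \<longleftrightarrow> (\<forall>A\<in>#fst S. peval v A) \<longrightarrow> (\<exists>B\<in>#snd S. peval v B)"

definition valid :: "sequent \<Rightarrow> bool" where
  "valid S \<longleftrightarrow> (\<forall>v. holds v S)"

text \<open>Which enumeration of the multisets is chosen is irrelevant: only \<open>peval\<close>, \<open>wff\<close>
  and \<open>boxes\<close> of the formula are ever used.\<close>
definition seq_fm :: "sequent \<Rightarrow> fm" where
  "seq_fm S = Imp (conjs (SOME gs. mset gs = fst S)) (disjs (SOME ds. mset ds = snd S))"

lemma peval_conjs: "peval v (conjs xs) \<longleftrightarrow> (\<forall>x\<in>set xs. peval v x)"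
  by (induction xs rule: conjs.induct) auto

lemma peval_disjs: "peval v (disjs xs) \<longleftrightarrow> (\<exists>x\<in>set xs. peval v x)"
  by (induction xs rule: disjs.induct) auto

lemma wff_conjs: "wff (conjs xs) \<longleftrightarrow> (\<forall>x\<in>set xs. wff x)"
  by (induction xs rule: conjs.induct) auto

lemma wff_disjs: "wff (disjs xs) \<longleftrightarrow> (\<forall>x\<in>set xs. wff x)"
  by (induction xs rule: disjs.induct) auto

lemma set_some_mset: "set (SOME xs. mset xs = M) = set_mset M"
  by (metis (mono_tags, lifting) ex_mset someI_ex set_mset_mset)

lemma peval_seq_fm [simp]: "peval v (seq_fm S) \<longleftrightarrow> holds v S"
  by (simp add: seq_fm_def holds_def peval_conjs peval_disjs set_some_mset)

lemma wff_seq_fm [simp]: "wff (seq_fm S) \<longleftrightarrow> wf_seq S"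
  by (auto simp: seq_fm_def wf_seq_def wff_conjs wff_disjs set_some_mset)

lemma hil_wff: "hil L A \<Longrightarrow> wff A"
  by (induction rule: hil.induct) auto

lemma axiom_H: "ax_H F \<Longrightarrow> axiom L F"
  by (cases L) auto

lemma axiom_K: "ax_K F \<Longrightarrow> axiom L F"
  by (cases L) auto

lemma axiom_4: "ax_4 F \<Longrightarrow> axiom L F"
  by (cases L) auto

lemma hil_taut_consequence:
  assumes "finite Ps" and "\<forall>P\<in>Ps. hil L P" and "wff C"
    and "\<forall>v. (\<forall>P\<in>Ps. peval v P) \<longrightarrow> peval v C"
  shows "hil L C"
  using assms
proof (induction Ps arbitrary: C rule: finite_induct)
  case empty
  then show ?case by (auto intro: hil.taut simp: taut_def)
next
  case (insert P Ps)
  have "hil L (Imp P C)"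
    using insert by (intro insert.IH) (auto dest: hil_wff)
  then show ?case
    using insert.prems(1) by (auto intro: hil.mp)
qed

lemma hil_seq_rule0: "wf_seq S \<Longrightarrow> valid S \<Longrightarrow> hil L (seq_fm S)"
  by (intro hil_taut_consequence[of "{}"]) (auto simp: valid_def)

lemma hil_seq_rule1:
  "hil L (seq_fm S1) \<Longrightarrow> wf_seq S \<Longrightarrow> (\<forall>v. holds v S1 \<longrightarrow> holds v S) \<Longrightarrow> hil L (seq_fm S)"
  by (intro hil_taut_consequence[of "{seq_fm S1}"]) auto

lemma hil_seq_rule2:
  "hil L (seq_fm S1) \<Longrightarrow> hil L (seq_fm S2) \<Longrightarrow> wf_seq S
    \<Longrightarrow> (\<forall>v. holds v S1 \<longrightarrow> holds v S2 \<longrightarrow> holds v S) \<Longrightarrow> hil L (seq_fm S)"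
  by (intro hil_taut_consequence[of "{seq_fm S1, seq_fm S2}"]) auto

lemma hil_Box_index_mono:
  assumes "m \<le> j" and "wff (Box m A)"
  shows "hil L (Imp (Box m A) (Box j A))"
  using assms
proof (induction j rule: dec_induct)
  case base
  then show ?case by (intro hil_taut_consequence[of "{}"]) auto
next
  case (step k)
  have "hil L (Imp (Box k A) (Box (Suc k) A))"
    using step by (intro hil.ax axiom_H) (auto simp: ax_H_def)
  with step show ?case
    by (intro hil_taut_consequence[of "{Imp (Box m A) (Box k A), Imp (Box k A) (Box (Suc k) A)}"]) auto
qed

lemma hil_Box_Box:
  assumes "m < k" and "wff (Box m A)"
  shows "hil L (Imp (Box m A) (Box k (Box m A)))"
proof -
  have "hil L (Imp (Box m A) (Box (Suc m) (Box m A)))"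
    using assms by (intro hil.ax axiom_4) (auto simp: ax_4_def)
  moreover have "hil L (Imp (Box (Suc m) (Box m A)) (Box k (Box m A)))"
    using assms by (intro hil_Box_index_mono) auto
  ultimately show ?thesis
    using assms by (intro hil_taut_consequence[of
        "{Imp (Box m A) (Box (Suc m) (Box m A)), Imp (Box (Suc m) (Box m A)) (Box k (Box m A))}"]) auto
qed

lemma hil_regular:
  assumes "hil L (seq_fm (X, {#B#}))"
    and "\<forall>x\<in>#X. \<forall>m\<in>boxes x. m < n" and "\<forall>m\<in>boxes B. m < n"
  shows "hil L (seq_fm (image_mset (Box n) X, {#Box n B#}))"
  using assms
proof (induction X arbitrary: B rule: multiset_induct)
  case empty
  then have "hil L B"
    by (intro hil_taut_consequence[of "{seq_fm ({#}, {#B#})}"])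
      (auto simp: holds_def wf_seq_def dest: hil_wff)
  then have "hil L (Box n B)"
    using empty.prems by (intro hil.nec) auto
  then show ?case
    by (intro hil_taut_consequence[of "{Box n B}"]) (auto simp: holds_def wf_seq_def dest: hil_wff)
next
  case (add x X)
  have wf: "wff x" "wf_seq (X, {#B#})"
    using hil_wff[OF add.prems(1)] by (auto simp: wf_seq_def)
  have "hil L (seq_fm (X, {#Imp x B#}))"
    using wf by (intro hil_seq_rule1[OF add.prems(1)]) (auto simp: holds_def wf_seq_def)
  then have "hil L (seq_fm (image_mset (Box n) X, {#Box n (Imp x B)#}))"
    using add.prems by (intro add.IH) auto
  moreover have "hil L (Imp (Box n (Imp x B)) (Imp (Box n x) (Box n B)))"
    using add.prems wf by (intro hil.ax axiom_K) (auto simp: ax_K_def wf_seq_def)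
  ultimately show ?case
    using add.prems wf
    by (intro hil_taut_consequence[of "{seq_fm (image_mset (Box n) X, {#Box n (Imp x B)#}),
          Imp (Box n (Imp x B)) (Imp (Box n x) (Box n B))}"]) (auto simp: holds_def wf_seq_def)
qed

section \<open>Soundness of the sequent calculi\<close>

lemma wf_box_context:
  assumes "wf_seq (image_mset (Box n) S + image_mset boxp Gm, D)" and "\<forall>p\<in>#Gm. fst p < n"
  shows "\<forall>x\<in>#S + image_mset snd Gm + image_mset boxp Gm. wff x \<and> (\<forall>m\<in>boxes x. m < n)"
proof
  fix x assume "x \<in># S + image_mset snd Gm + image_mset boxp Gm"
  then consider "x \<in># S" | p where "p \<in># Gm" "x = snd p" | p where "p \<in># Gm" "x = boxp p"
    by auto
  then show "wff x \<and> (\<forall>m\<in>boxes x. m < n)"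
  proof cases
    case 1
    then have "Box n x \<in># image_mset (Box n) S + image_mset boxp Gm + D" by simp
    then have "wff (Box n x)" using assms(1) unfolding wf_seq_def by (metis fst_conv snd_conv)
    then show ?thesis by simp
  next
    case (2 p)
    then have "wff (boxp p)" and "fst p < n" using assms by (auto simp: wf_seq_def)
    then show ?thesis using 2 by (auto simp: boxp_def)
  next
    case (3 p)
    then have "wff (boxp p)" and "fst p < n" using assms by (auto simp: wf_seq_def)
    then show ?thesis using 3 by (auto simp: boxp_def)
  qed
qed

lemma hil_boxR_sound:
  assumes below: "\<forall>p\<in>#Gm. fst p < n"
    and prem: "hil L (seq_fm (S + image_mset snd Gm + image_mset boxp Gm, {#A#}))"
    and wf: "wf_seq (image_mset (Box n) S + image_mset boxp Gm, {#Box n A#})"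
  shows "hil L (seq_fm (image_mset (Box n) S + image_mset boxp Gm, {#Box n A#}))"
proof -
  let ?X = "S + image_mset snd Gm + image_mset boxp Gm"
  let ?boxed = "seq_fm (image_mset (Box n) ?X, {#Box n A#})"
  let ?to_snd = "\<lambda>p. Imp (boxp p) (Box n (snd p))"
  let ?to_boxp = "\<lambda>p. Imp (boxp p) (Box n (boxp p))"
  let ?Ps = "insert ?boxed (?to_snd ` set_mset Gm \<union> ?to_boxp ` set_mset Gm)"
  have ctx: "\<forall>x\<in>#?X. wff x \<and> (\<forall>m\<in>boxes x. m < n)"
    using wf below by (rule wf_box_context)
  have "hil L ?boxed"
    using prem ctx wf by (intro hil_regular) (auto simp: wf_seq_def)
  moreover have "hil L (?to_snd p)" and "hil L (?to_boxp p)" if "p \<in># Gm" for p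
    using that ctx below unfolding boxp_def
    by (auto intro!: hil_Box_index_mono hil_Box_Box)
  ultimately have "\<forall>P\<in>?Ps. hil L P"
    by blast
  moreover have "peval v (seq_fm (image_mset (Box n) S + image_mset boxp Gm, {#Box n A#}))"
    if "\<forall>P\<in>?Ps. peval v P" for v
  proof -
    have boxed: "peval v ?boxed" and lift: "\<forall>p\<in>#Gm. peval v (?to_snd p) \<and> peval v (?to_boxp p)"
      using that by blast+
    have "peval v (Box n x)"
      if "x \<in># ?X" and "\<forall>C\<in>#image_mset (Box n) S + image_mset boxp Gm. peval v C" for x
      using that lift by (auto simp del: peval.simps) auto
    then show ?thesis
      using boxed unfolding peval_seq_fm holds_def fst_conv snd_conv
      by (simp del: peval.simps) blast
  qed
  ultimately show ?thesis
    using wf by (intro hil_taut_consequence[of ?Ps]) auto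
qed

lemma gprov_wf: "gprov L S \<Longrightarrow> wf_seq S"
  by (induction rule: gprov.induct) (auto simp: wf_seq_def)

theorem gprov_sound: "gprov L S \<Longrightarrow> hil L (seq_fm S)"
proof (induction rule: gprov.induct)
  case (box4R Gm n S A)
  then show ?case by (intro hil_boxR_sound)
next
  case (boxDR Gm n S)
  let ?G = "image_mset (Box n) S + image_mset boxp Gm"
  have wf: "wf_seq (?G, {#Box n Bot#})"
    using boxDR.hyps(4) by (simp add: wf_seq_def)
  have "hil L (seq_fm (S + image_mset snd Gm + image_mset boxp Gm, {#Bot#}))"
    using gprov_wf[OF boxDR.hyps(3)]
    by (intro hil_seq_rule1[OF boxDR.IH]) (auto simp: holds_def wf_seq_def)
  then have "hil L (seq_fm (?G, {#Box n Bot#}))"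
    by (rule hil_boxR_sound[OF boxDR.hyps(2) _ wf])
  moreover have "hil L (Neg (Box n Bot))"
    using boxDR.hyps(1) by (intro hil.ax) (auto simp: ax_D_def)
  ultimately show ?case
    using boxDR.hyps(4)
    by (intro hil_taut_consequence[of "{seq_fm (?G, {#Box n Bot#}), Neg (Box n Bot)}"])
      (auto simp: holds_def)
next
  case (boxSR Gm n S A)
  have "\<forall>x\<in>#image_mset snd Gm. wff x"
    using wf_box_context[OF boxSR.hyps(4,2)] by auto
  then have "hil L (seq_fm (S + image_mset snd Gm + image_mset boxp Gm, {#A#}))"
    using gprov_wf[OF boxSR.hyps(3)]
    by (intro hil_seq_rule1[OF boxSR.IH]) (auto simp: holds_def wf_seq_def)
  then show ?case
    using boxSR.hyps(2,4) by (intro hil_boxR_sound)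
next
  case (boxL A G D n)
  have "hil L (Imp (Box n A) A)"
    using boxL.hyps(1,3) by (intro hil.ax) (auto simp: ax_T_def)
  moreover have "wf_seq (add_mset (Box n A) G, D)"
    using gprov_wf[OF boxL.hyps(2)] boxL.hyps(3) by (simp add: wf_seq_def)
  ultimately show ?case
    using boxL.IH
    by (intro hil_taut_consequence[of "{seq_fm (add_mset A G, D), Imp (Box n A) A}"])
      (auto simp: holds_def)
qed (((rule hil_seq_rule2, assumption, assumption) | (rule hil_seq_rule1, assumption)
      | rule hil_seq_rule0); auto simp: holds_def valid_def wf_seq_def dest!: gprov_wf)+

section \<open>Completeness of the sequent calculi\<close>

lemma gprov_weakenL: "gprov L (G, D) \<Longrightarrow> \<forall>A\<in>#G'. wff A \<Longrightarrow> gprov L (G + G', D)"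
  by (induction G' rule: multiset_induct) (auto intro: gprov.weakL)

lemma gprov_weakenR: "gprov L (G, D) \<Longrightarrow> \<forall>A\<in>#D'. wff A \<Longrightarrow> gprov L (G, D + D')"
  by (induction D' rule: multiset_induct) (auto intro: gprov.weakR)

lemma gprov_weaken: "gprov L (G, D) \<Longrightarrow> wf_seq (G', D') \<Longrightarrow> gprov L (G + G', D + D')"
  by (intro gprov_weakenR gprov_weakenL) (auto simp: wf_seq_def)

text \<open>Number of propositional connectives; formulas of size \<open>0\<close> (atoms, \<open>\<bottom>\<close>, \<open>\<top>\<close> and
  boxed formulas) are the propositional variables of \<open>peval\<close>.\<close>
fun psize :: "fm \<Rightarrow> nat" where
  "psize (Neg A) = Suc (psize A)"
| "psize (Conj A B) = Suc (psize A + psize B)"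
| "psize (Disj A B) = Suc (psize A + psize B)"
| "psize (Imp A B) = Suc (psize A + psize B)"
| "psize _ = 0"

definition seq_psize :: "sequent \<Rightarrow> nat" where
  "seq_psize S = (\<Sum>A\<in>#fst S + snd S. psize A)"

lemma gprov_atomic_complete:
  assumes wf: "wf_seq (G, D)" and valid: "valid (G, D)"
    and atomic: "\<forall>A\<in>#G + D. psize A = 0"
  shows "gprov L (G, D)"
proof (cases "Bot \<in># G")
  case True
  then obtain G' where "G = add_mset Bot G'" by (metis multi_member_split)
  then show ?thesis using gprov_weaken[OF gprov.botL, of G' D] wf by (auto simp: wf_seq_def)
next
  case no_Bot: False
  show ?thesis
  proof (cases "Top \<in># D")
    case True
    then obtain D' where "D = add_mset Top D'" by (metis multi_member_split)
    then show ?thesis using gprov_weaken[OF gprov.topR, of G D'] wf by (auto simp: wf_seq_def)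
  next
    case no_Top: False
    text \<open>The valuation making exactly the antecedent true refutes the sequent unless
      some succedent formula also occurs in the antecedent.\<close>
    define v where "v A \<longleftrightarrow> A \<in># G" for A
    have "\<forall>A\<in>#G. peval v A"
    proof
      fix A assume A: "A \<in># G"
      with atomic have "psize A = 0" by simp
      with A no_Bot show "peval v A" by (cases A) (auto simp: v_def)
    qed
    then obtain B where B: "B \<in># D" "peval v B"
      using valid by (auto simp: valid_def holds_def)
    with atomic have "psize B = 0" by simp
    with B no_Top have "B \<in># G" by (cases B) (auto simp: v_def)
    then obtain G' where G': "G = add_mset B G'" by (metis multi_member_split)
    obtain D' where D': "D = add_mset B D'" using B(1) by (metis multi_member_split)
    have "gprov L ({#B#} + G', {#B#} + D')"
      using gprov_weaken[OF gprov.id[of B]] wf G' D' by (auto simp: wf_seq_def)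
    then show ?thesis using G' D' by simp
  qed
qed

lemma gprov_decompose_left:
  assumes IH: "\<And>S'. seq_psize S' < seq_psize (add_mset A G, D) \<Longrightarrow> wf_seq S' \<Longrightarrow> valid S'
      \<Longrightarrow> gprov L S'"
    and "psize A \<noteq> 0" and wf: "wf_seq (add_mset A G, D)" and valid: "valid (add_mset A G, D)"
  shows "gprov L (add_mset A G, D)"
proof (cases A)
  case (Neg B)
  have "gprov L (G, add_mset B D)"
    using wf valid by (intro IH) (auto simp: Neg seq_psize_def wf_seq_def valid_def holds_def)
  then show ?thesis unfolding Neg by (rule gprov.negL)
next
  case (Conj B C)
  have "gprov L (add_mset B (add_mset C G), D)"
    using wf valid by (intro IH) (auto simp: Conj seq_psize_def wf_seq_def valid_def holds_def)
  then show ?thesis unfolding Conj by (rule gprov.conjL)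
next
  case (Disj B C)
  have "gprov L (add_mset B G, D)" "gprov L (add_mset C G, D)"
    using wf valid by (auto intro!: IH simp: Disj seq_psize_def wf_seq_def valid_def holds_def)
  then show ?thesis unfolding Disj by (rule gprov.disjL)
next
  case (Imp B C)
  have "gprov L (G, add_mset B D)" "gprov L (add_mset C G, D)"
    using wf valid by (auto intro!: IH simp: Imp seq_psize_def wf_seq_def valid_def holds_def)
  then show ?thesis unfolding Imp by (rule gprov.impL)
qed (use \<open>psize A \<noteq> 0\<close> in simp_all)

lemma gprov_decompose_right:
  assumes IH: "\<And>S'. seq_psize S' < seq_psize (G, add_mset A D) \<Longrightarrow> wf_seq S' \<Longrightarrow> valid S'
      \<Longrightarrow> gprov L S'"
    and "psize A \<noteq> 0" and wf: "wf_seq (G, add_mset A D)" and valid: "valid (G, add_mset A D)"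
  shows "gprov L (G, add_mset A D)"
proof (cases A)
  case (Neg B)
  have "gprov L (add_mset B G, D)"
    using wf valid by (intro IH) (auto simp: Neg seq_psize_def wf_seq_def valid_def holds_def)
  then show ?thesis unfolding Neg by (rule gprov.negR)
next
  case (Conj B C)
  have "valid (G, add_mset B D)" "valid (G, add_mset C D)"
    using valid unfolding Conj valid_def holds_def by fastforce+
  then have "gprov L (G, add_mset B D)" "gprov L (G, add_mset C D)"
    using wf by (auto intro!: IH simp: Conj seq_psize_def wf_seq_def)
  then show ?thesis unfolding Conj by (rule gprov.conjR)
next
  case (Disj B C)
  have "gprov L (G, add_mset B (add_mset C D))"
    using wf valid by (intro IH) (auto simp: Disj seq_psize_def wf_seq_def valid_def holds_def)
  then show ?thesis unfolding Disj by (rule gprov.disjR)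
next
  case (Imp B C)
  have "gprov L (add_mset B G, add_mset C D)"
    using wf valid by (intro IH) (auto simp: Imp seq_psize_def wf_seq_def valid_def holds_def)
  then show ?thesis unfolding Imp by (rule gprov.impR)
qed (use \<open>psize A \<noteq> 0\<close> in simp_all)

theorem gprov_prop_complete: "wf_seq S \<Longrightarrow> valid S \<Longrightarrow> gprov L S"
proof (induction "seq_psize S" arbitrary: S rule: less_induct)
  case less
  obtain G D where S: "S = (G, D)" by fastforce
  consider A G' where "G = add_mset A G'" "psize A \<noteq> 0"
    | A D' where "D = add_mset A D'" "psize A \<noteq> 0"
    | "\<forall>A\<in>#G + D. psize A = 0"
    by (metis multi_member_split union_iff)
  then show ?case
  proof cases
    case 1
    then show ?thesis using less unfolding S 1(1) by (intro gprov_decompose_left) simp_all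
  next
    case 2
    then show ?thesis using less unfolding S 2(1) by (intro gprov_decompose_right) simp_all
  next
    case 3
    then show ?thesis using less.prems unfolding S by (intro gprov_atomic_complete)
  qed
qed


lemma gprov_cut_valid:
  assumes "gprov L ({#}, {#X#})" and "wf_seq (G, D)" and "valid (add_mset X G, D)"
  shows "gprov L (G, D)"
proof -
  have "wff X"
    using gprov_wf[OF assms(1)] by (simp add: wf_seq_def)
  then have "gprov L (add_mset X G, D)"
    using assms(2,3) by (intro gprov_prop_complete) (auto simp: wf_seq_def)
  with assms(1) show ?thesis
    using gprov.cut[of L "{#}" X "{#}" G D] by simp
qed

lemma gprov_boxR:
  assumes below: "\<forall>p\<in>#Gm. fst p < n"
    and prem: "gprov L (S + image_mset boxp Gm, {#A#})"
    and wf: "wf_seq (image_mset (Box n) S + image_mset boxp Gm, {#Box n A#})"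
  shows "gprov L (image_mset (Box n) S + image_mset boxp Gm, {#Box n A#})"
proof (cases "L = S4h")
  case True
  then show ?thesis using gprov.boxSR below prem wf by blast
next
  case False
  then have "L \<in> {K4h, KD4h}" by (cases L) auto
  moreover have "gprov L (S + image_mset boxp Gm + image_mset snd Gm, {#A#})"
    using gprov_weakenL[OF prem, of "image_mset snd Gm"] wf_box_context[OF wf below] by auto
  ultimately show ?thesis
    using below wf by (intro gprov.box4R) (simp_all add: ac_simps)
qed

lemma gprov_H:
  assumes "wff (Box n A)"
  shows "gprov L ({#Box n A#}, {#Box (Suc n) A#})"
proof -
  have wf: "wf_seq ({#Box n A#}, {#Box (Suc n) A#})"
    using assms by (auto simp: wf_seq_def)
  show ?thesis
  proof (cases "L = S4h")
    case True
    have "gprov L ({#Box n A#}, {#A#})"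
      using gprov.boxL[OF True gprov.id[of A]] assms by simp
    then show ?thesis
      using gprov.boxSR[OF True, of "{#(n, A)#}" "Suc n" "{#}" A] wf by (simp add: boxp_def)
  next
    case False
    then have "L \<in> {K4h, KD4h}" by (cases L) auto
    moreover have "gprov L ({#Box n A, A#}, {#A#})"
      using assms by (intro gprov_prop_complete) (auto simp: wf_seq_def valid_def holds_def)
    ultimately show ?thesis
      using gprov.box4R[of L "{#(n, A)#}" "Suc n" "{#}" A] wf by (simp add: boxp_def)
  qed
qed

lemma gprov_K:
  assumes "wff (Box n (Imp A B))"
  shows "gprov L ({#Box n A, Box n (Imp A B)#}, {#Box n B#})"
proof -
  have "gprov L ({#A, Imp A B#} + image_mset boxp {#}, {#B#})"
    using assms by (intro gprov_prop_complete) (auto simp: wf_seq_def valid_def holds_def)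
  then have "gprov L (image_mset (Box n) {#A, Imp A B#} + image_mset boxp {#}, {#Box n B#})"
    using assms by (intro gprov_boxR) (auto simp: wf_seq_def)
  then show ?thesis by simp
qed

lemma gprov_4:
  assumes "wff (Box n A)"
  shows "gprov L ({#Box n A#}, {#Box (Suc n) (Box n A)#})"
proof -
  have "gprov L ({#} + image_mset boxp {#(n, A)#}, {#Box n A#})"
    using gprov.id[of "Box n A"] assms by (simp add: boxp_def)
  then have "gprov L (image_mset (Box (Suc n)) {#} + image_mset boxp {#(n, A)#},
      {#Box (Suc n) (Box n A)#})"
    using assms by (intro gprov_boxR) (auto simp: wf_seq_def boxp_def)
  then show ?thesis by (simp add: boxp_def)
qed

lemma gprov_D:
  assumes "L = KD4h"
  shows "gprov L ({#Box n Bot#}, {#})"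
  using gprov.boxDR[OF assms, of "{#}" n "{#Bot#}"] gprov.botL
  by (simp add: wf_seq_def)

lemma gprov_axiom:
  assumes wff: "wff F" and ax: "axiom L F"
  shows "gprov L ({#}, {#F#})"
proof -
  have impR: "gprov L ({#}, {#Imp A B#})" if "gprov L ({#A#}, {#B#})" for A B
    using gprov.impR[of L A "{#}" B "{#}"] that by simp
  consider "ax_H F" | "ax_K F" | "ax_4 F" | "ax_D F" "L = KD4h" | "ax_T F" "L = S4h"
    using ax by (cases L) auto
  then show ?thesis
  proof cases
    case 1
    then show ?thesis using wff by (auto simp: ax_H_def intro!: impR gprov_H)
  next
    case 2
    then obtain n A B where F: "F = Imp (Box n (Imp A B)) (Imp (Box n A) (Box n B))"
      by (auto simp: ax_K_def)
    have "gprov L ({#Box n (Imp A B)#}, {#Imp (Box n A) (Box n B)#})"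
      using gprov.impR[OF gprov_K[of n A B L]] wff F by simp
    then show ?thesis unfolding F by (rule impR)
  next
    case 3
    then show ?thesis using wff by (auto simp: ax_4_def intro!: impR gprov_4)
  next
    case 4
    then obtain n where "F = Neg (Box n Bot)" by (auto simp: ax_D_def)
    then show ?thesis
      using gprov.negR[OF gprov_D[OF 4(2), of n, simplified]] by simp
  next
    case 5
    then obtain n A where F: "F = Imp (Box n A) A" by (auto simp: ax_T_def)
    have "gprov L ({#Box n A#}, {#A#})"
      using gprov.boxL[OF 5(2) gprov.id[of A]] wff F by simp
    then show ?thesis unfolding F by (rule impR)
  qed
qed

theorem hil_complete: "hil L A \<Longrightarrow> gprov L ({#}, {#A#})"
proof (induction rule: hil.induct)
  case (taut A)
  then show ?case
    by (intro gprov_prop_complete) (simp_all add: wf_seq_def valid_def holds_def taut_def)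
next
  case (ax A)
  then show ?case by (rule gprov_axiom)
next
  case (mp A B)
  have "wff A" "wff B"
    using hil_wff[OF mp.hyps(1)] by simp_all
  then have "gprov L ({#A#}, {#B#})"
    by (intro gprov_cut_valid[OF mp.IH(1)]) (auto simp: wf_seq_def valid_def holds_def)
  then show ?case
    using gprov.cut[OF mp.IH(2)] by simp
next
  case (nec A n)
  then have "gprov L (image_mset (Box n) {#} + image_mset boxp {#}, {#Box n A#})"
    by (intro gprov_boxR) (auto simp: wf_seq_def dest: hil_wff)
  then show ?case by simp
qed

theorem theorem3p7:
  fixes L :: logic
  shows "(\<forall>gs ds. (\<forall>A\<in>set gs \<union> set ds. wff A) \<longrightarrow>
            (gprov L (mset gs, mset ds) \<longleftrightarrow> hil L (Imp (conjs gs) (disjs ds))))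
       \<and> (\<forall>A. wff A \<longrightarrow> (hil L A \<longleftrightarrow> gprov L ({#}, {#A#})))"
proof (intro conjI allI impI iffI)
  fix gs ds
  assume "gprov L (mset gs, mset ds)"
  then have "hil L (seq_fm (mset gs, mset ds))" by (rule gprov_sound)
  then show "hil L (Imp (conjs gs) (disjs ds))"
    by (intro hil_taut_consequence[of "{seq_fm (mset gs, mset ds)}"])
      (auto simp: holds_def peval_conjs peval_disjs wff_conjs wff_disjs wf_seq_def dest: hil_wff)
next
  fix gs ds
  assume "\<forall>A\<in>set gs \<union> set ds. wff A" and "hil L (Imp (conjs gs) (disjs ds))"
  then show "gprov L (mset gs, mset ds)"
    by (intro gprov_cut_valid[OF hil_complete])
      (auto simp: wf_seq_def valid_def holds_def peval_conjs peval_disjs)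
next
  fix A
  assume "hil L A"
  then show "gprov L ({#}, {#A#})" by (rule hil_complete)
next
  fix A
  assume "wff A" and "gprov L ({#}, {#A#})"
  then have "hil L (seq_fm ({#}, {#A#}))" by (intro gprov_sound)
  with \<open>wff A\<close> show "hil L A"
    by (intro hil_taut_consequence[of "{seq_fm ({#}, {#A#})}"]) (auto simp: holds_def)
qed

end
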